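(* Assume Setup (S) and the completion data (C), and suppose the integer columns $c_n$ can be (and are) chosen so that $\det A_{n,n+1}=1$ for all $n\ge 0$. Then $G=\mathbb{Z}$ and the homomorphism $\Psi:K_0(\mathfrak{A})\to C(X_{min},\mathbb{Z})$ determined by $\Psi\circ\iota_n=\Phi_n$ is a group isomorphism onto $C(X_{min},\mathbb{Z})$ sending the order unit $[1_{\mathfrak{A}}]$ to $\chi_{X_{min}}$.
   Context: Setup (S): Let $\mathfrak{A}=\varinjlim(\mathfrak{A}_n,\phi_n)$ be an AF C$^*$-algebra with $\mathfrak{A}_0=\mathbb{C}$, $\mathfrak{A}_n$ having exactly $n+1$ summands, $\phi_n$ unital injective $*$-homomorphisms with multiplicity matrices $\overline{A}_{n,n+1}\in M_{n+2,n+1}(\mathbb{N})$ ($(i,j)$ entry = multiplicity of summand $j$ of $\mathfrak{A}_n$ in summand $i$ of $\mathfrak{A}_{n+1}$), each of rank $n+1$. The Bratteli diagram has vertices $v(i,n)$, $1\le i\le n+1$, and $(\overline{A}_{n,n+1})_{ij}$ edges from $v(j,n)$ to $v(i,n+1)$. A minimal reduction is a subgraph with the same vertices, obtained by deleting edges only, in which for all $n\ge 0$ each vertex at level $n+1$ receives exactly one edge from level $n$ and each vertex at level $n$ emits at least one edge to level $n+1$. Fix a minimal reduction. Then for each $n\ge 1$ there are unique $1\le r'_n<r_n\le n+1$ and $1\le a_n\le n$ such that $v(r'_n,n)$ and $v(r_n,n)$ are the two vertices joined to $v(a_n,n-1)$, every other vertex of level $n-1$ being joined to exactly one vertex of level $n$;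 set $r_0=1$. $X_{min}$ is the set of infinite paths $(v(i_n,n))_{n\ge0}$, $i_0=1$, in the minimal reduction, with the topology having as clopen basis the nonempty sets $B(i,n)=\{\text{paths with }i_n=i\}$; it is a compact metrizable totally disconnected space. Define the linear map $R_n:\mathbb{C}^{n+1}\to C(X_{min},\mathbb{C})$ by $R_n(\alpha_1,\dots,\alpha_{n+1})=\sum_{l=0}^n\alpha_{l+1}\chi_{B(r_l,l)}$. Completion data (C): $K_0(\mathfrak{A}_n)$ is identified with $\mathbb{Z}^{n+1}$ (column vectors, positive cone $\mathbb{Z}_+^{n+1}$), $K_0(\phi_n)=\phi_{n*}$ is multiplication by $\overline{A}_{n,n+1}$, and $K_0(\mathfrak{A})=\varinjlim(\mathbb{Z}^{n+1},\phi_{n*})$ with canonical maps $\iota_n$ and order unit the image of $1\in\mathbb{Z}=K_0(\mathfrak{A}_0)$. For each $n\ge 0$ choose a column $c_n\in\mathbb{Z}^{n+2}$ such that $A_{n,n+1}=[\,\overline{A}_{n,n+1}\mid c_n\,]\in M_{n+2}(\mathbb{Z})$ is invertible. Put $A_n=(A_{0,1}^{-1}\oplus I_{n-1})(A_{1,2}^{-1}\oplus I_{n-2})\cdots(A_{n-2,n-1}^{-1}\oplus I_1)A_{n-1,n}^{-1}$ for $n\ge1$, let $G=\bigcup_{n\ge1}\{a/\det(A_n^{-1}):a\in\mathbb{Z}\}\subseteq\mathbb{Q}$ with the discrete topology, and $\Phi_n=R_n\circ A_n$ restricted to $\mathbb{Z}^{n+1}$; one has $\Phi_{n+1}\circ\phi_{n*}=\Phi_n$,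 so $\Psi$ is well defined. *)

theory Defs
  imports "HOL-Analysis.Function_Topology"
    "Jordan_Normal_Form.Determinant"
    "Jordan_Normal_Form.Gauss_Jordan_Elimination"
    "Jordan_Normal_Form.DL_Rank"
begin

(* Conventions: all indices are 0-based.  Vertex v(i,n) of the paper (1 <= i <= n+1)
   is vertex i-1 here (0 <= i <= n).  Abar n is the (n+2) x (n+1) multiplicity matrix
   \<open>overline A_{n,n+1}\<close>; entry (i,j) = multiplicity of summand j of A_n in summand i of A_{n+1}.
   E n i j is the number of edges of the fixed minimal reduction from v(j,n) to v(i,n+1). *)

definition minimal_reduction :: "(nat \<Rightarrow> int mat) \<Rightarrow> (nat \<Rightarrow> nat \<Rightarrow> nat \<Rightarrow> nat) \<Rightarrow> bool" where
  "minimal_reduction Abar E \<longleftrightarrow>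
     (\<forall>n. (\<forall>i\<le>n+1. \<forall>j\<le>n. int (E n i j) \<le> Abar n $$ (i,j))
        \<and> (\<forall>i\<le>n+1. (\<Sum>j\<le>n. E n i j) = 1)
        \<and> (\<forall>j\<le>n. \<exists>i\<le>n+1. 0 < E n i j))"

definition a_seq :: "(nat \<Rightarrow> nat \<Rightarrow> nat \<Rightarrow> nat) \<Rightarrow> nat \<Rightarrow> nat" where
  "a_seq E n = (THE a. a \<le> n - 1 \<and> 2 \<le> (\<Sum>i\<le>n. E (n-1) i a))"

definition r_seq :: "(nat \<Rightarrow> nat \<Rightarrow> nat \<Rightarrow> nat) \<Rightarrow> nat \<Rightarrow> nat" where
  "r_seq E n = (if n = 0 then 0 else (GREATEST i. i \<le> n \<and> 0 < E (n-1) i (a_seq E n)))"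

definition Xmin :: "(nat \<Rightarrow> nat \<Rightarrow> nat \<Rightarrow> nat) \<Rightarrow> (nat \<Rightarrow> nat) set" where
  "Xmin E = {x. x 0 = 0 \<and> (\<forall>n. x n \<le> n \<and> 0 < E n (x (Suc n)) (x n))}"

definition chiB :: "nat \<Rightarrow> nat \<Rightarrow> (nat \<Rightarrow> nat) \<Rightarrow> 'a::zero_neq_one" where
  "chiB i n x = (if x n = i then 1 else 0)"

definition Rmap :: "(nat \<Rightarrow> nat \<Rightarrow> nat \<Rightarrow> nat) \<Rightarrow> nat \<Rightarrow> rat vec \<Rightarrow> (nat \<Rightarrow> nat) \<Rightarrow> rat" where
  "Rmap E n \<alpha> x = (\<Sum>l\<le>n. \<alpha> $ l * chiB (r_seq E l) l x)"

definition Acomp :: "(nat \<Rightarrow> int mat) \<Rightarrow> (nat \<Rightarrow> int vec) \<Rightarrow> nat \<Rightarrow> rat mat" where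
  "Acomp Abar c n = mat (n+2) (n+2)
     (\<lambda>(i,j). if j < n+1 then rat_of_int (Abar n $$ (i,j)) else rat_of_int (c n $ i))"

definition minv :: "rat mat \<Rightarrow> rat mat" where
  "minv M = the (mat_inverse M)"

definition Ablk :: "(nat \<Rightarrow> int mat) \<Rightarrow> (nat \<Rightarrow> int vec) \<Rightarrow> nat \<Rightarrow> nat \<Rightarrow> rat mat" where
  "Ablk Abar c n k = four_block_mat (minv (Acomp Abar c k))
      (0\<^sub>m (k+2) (n-1-k)) (0\<^sub>m (n-1-k) (k+2)) (1\<^sub>m (n-1-k))"

definition Amat :: "(nat \<Rightarrow> int mat) \<Rightarrow> (nat \<Rightarrow> int vec) \<Rightarrow> nat \<Rightarrow> rat mat" where
  "Amat Abar c n = foldr (\<lambda>k M. Ablk Abar c n k * M) [0..<n] (1\<^sub>m (n+1))"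

definition Gset :: "(nat \<Rightarrow> int mat) \<Rightarrow> (nat \<Rightarrow> int vec) \<Rightarrow> rat set" where
  "Gset Abar c = (\<Union>n\<in>{1..}. {rat_of_int a / det (minv (Amat Abar c n)) | a. True})"

definition Phi :: "(nat \<Rightarrow> int mat) \<Rightarrow> (nat \<Rightarrow> int vec) \<Rightarrow> (nat \<Rightarrow> nat \<Rightarrow> nat \<Rightarrow> nat)
    \<Rightarrow> nat \<Rightarrow> int vec \<Rightarrow> (nat \<Rightarrow> nat) \<Rightarrow> rat" where
  "Phi Abar c E n v x = (if x \<in> Xmin E
      then Rmap E n (Amat Abar c n *\<^sub>v map_vec rat_of_int v) x else 0)"

fun phi_iter :: "(nat \<Rightarrow> int mat) \<Rightarrow> nat \<Rightarrow> nat \<Rightarrow> int vec \<Rightarrow> int vec" where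
  "phi_iter Abar n 0 v = v"
| "phi_iter Abar n (Suc k) v = Abar (n+k) *\<^sub>v phi_iter Abar n k v"

definition K0rel :: "(nat \<Rightarrow> int mat) \<Rightarrow> ((nat \<times> int vec) \<times> (nat \<times> int vec)) set" where
  "K0rel Abar = {((n,v),(m,w)). v \<in> carrier_vec (n+1) \<and> w \<in> carrier_vec (m+1) \<and>
      (\<exists>k. n \<le> k \<and> m \<le> k \<and> phi_iter Abar n (k-n) v = phi_iter Abar m (k-m) w)}"

definition K0 :: "(nat \<Rightarrow> int mat) \<Rightarrow> (nat \<times> int vec) set set" where
  "K0 Abar = (SIGMA n:UNIV. carrier_vec (n+1)) // K0rel Abar"

definition iota :: "(nat \<Rightarrow> int mat) \<Rightarrow> nat \<Rightarrow> int vec \<Rightarrow> (nat \<times> int vec) set" where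
  "iota Abar n v = K0rel Abar `` {(n,v)}"

definition K0add :: "(nat \<Rightarrow> int mat) \<Rightarrow> (nat \<times> int vec) set \<Rightarrow> (nat \<times> int vec) set \<Rightarrow> (nat \<times> int vec) set" where
  "K0add Abar X Y = (let (n,v) = (SOME p. p \<in> X); (m,w) = (SOME p. p \<in> Y); k = max n m in
      iota Abar k (phi_iter Abar n (k-n) v + phi_iter Abar m (k-m) w))"

definition K0grp :: "(nat \<Rightarrow> int mat) \<Rightarrow> (nat \<times> int vec) set monoid" where
  "K0grp Abar = \<lparr>carrier = K0 Abar, mult = K0add Abar, one = iota Abar 0 (0\<^sub>v 1)\<rparr>"

definition K0unit :: "(nat \<Rightarrow> int mat) \<Rightarrow> (nat \<times> int vec) set" where
  "K0unit Abar = iota Abar 0 (vec 1 (\<lambda>_. 1))"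

definition CXZ :: "(nat \<Rightarrow> nat \<Rightarrow> nat \<Rightarrow> nat) \<Rightarrow> ((nat \<Rightarrow> nat) \<Rightarrow> int) set" where
  "CXZ E = {f. continuous_on (Xmin E) f \<and> (\<forall>x. x \<notin> Xmin E \<longrightarrow> f x = 0)}"

definition CXZgrp :: "(nat \<Rightarrow> nat \<Rightarrow> nat \<Rightarrow> nat) \<Rightarrow> ((nat \<Rightarrow> nat) \<Rightarrow> int) monoid" where
  "CXZgrp E = \<lparr>carrier = CXZ E, mult = (\<lambda>f g x. f x + g x), one = (\<lambda>_. 0)\<rparr>"

definition chiX :: "(nat \<Rightarrow> nat \<Rightarrow> nat \<Rightarrow> nat) \<Rightarrow> (nat \<Rightarrow> nat) \<Rightarrow> int" where
  "chiX E x = (if x \<in> Xmin E then 1 else 0)"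

end

theory Submission
  imports Defs
begin

(* Since det A_{n,n+1} = 1, each A_{n,n+1}^{-1} is the integer adjugate matrix, so A_n is an integer
   matrix of determinant 1 and G = Z.  Moreover A_{n+1} (phi_n v) = (A_n v, 0), so the maps
   Phi_n = R_n o A_n are integer valued and compatible with the connecting maps; they induce Psi.

   Psi is injective because A_n is invertible and the functions chi_{B(r_l,l)}, l <= n, are linearly
   independent on X_min: the coefficient of chi_{B(r_n,n)} is the difference of the values at two
   paths that agree up to level n-1 and leave a_n through r_n and through r'_n respectively.

   Psi is surjective because a continuous integer function on the compact space X_min depends
   only on finitely many coordinates, i.e. is an integer combination of some chi_{B(i,n)}, and
   these are integer combinations of the chi_{B(r_l,l)}: if j is the parent of i /= r_{n+1}, then
   chi_{B(i,n+1)} = chi_{B(j,n)} on X_min, minus chi_{B(r_{n+1},n+1)} when j = a_{n+1}. *)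

section \<open>Matrices\<close>

lemma minv_eqI:
  fixes A B :: "rat mat"
  assumes A: "A \<in> carrier_mat n n" and B: "B \<in> carrier_mat n n"
    and AB: "A * B = 1\<^sub>m n" and BA: "B * A = 1\<^sub>m n"
  shows "minv A = B"
proof (cases "mat_inverse A")
  case None
  have "A \<in> Units (ring_mat TYPE(rat) n ())"
    unfolding Units_def using A B AB BA by (auto simp: ring_mat_simps)
  with mat_inverse(1)[OF A None, of "()"] show ?thesis by blast
next
  case (Some B')
  with mat_inverse(2)[OF A Some] have B': "B' * A = 1\<^sub>m n" "B' \<in> carrier_mat n n" by auto
  have "B' = B' * (A * B)" using AB B' by simp
  also have "\<dots> = (B' * A) * B" using A B B'(2) by (simp add: assoc_mult_mat)
  also have "\<dots> = B" using B' B AB by simp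
  finally show ?thesis unfolding minv_def Some by simp
qed

lemma unimodular_adj_mat:
  fixes A :: "'a::comm_ring_1 mat"
  assumes A: "A \<in> carrier_mat n n" and det: "det A = 1"
  shows "A * adj_mat A = 1\<^sub>m n" "adj_mat A * A = 1\<^sub>m n" "adj_mat A \<in> carrier_mat n n"
    and "det (adj_mat A) = 1"
proof -
  show AB: "A * adj_mat A = 1\<^sub>m n" "adj_mat A * A = 1\<^sub>m n" "adj_mat A \<in> carrier_mat n n"
    using adj_mat[OF A] det by auto
  have "det A * det (adj_mat A) = 1"
    using det_mult[OF A AB(3)] AB(1) by simp
  then show "det (adj_mat A) = 1" using det by simp
qed

lemma minv_of_int_unimodular:
  assumes A: "A \<in> carrier_mat n n" and det: "det A = 1"
  shows "minv (map_mat rat_of_int A) = map_mat rat_of_int (adj_mat A)"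
proof (rule minv_eqI)
  note adj = unimodular_adj_mat[OF A det]
  show "map_mat rat_of_int A * map_mat rat_of_int (adj_mat A) = 1\<^sub>m n"
    by (simp add: of_int_hom.mat_hom_mult[symmetric, OF A adj(3)] adj of_int_hom.mat_hom_one)
  show "map_mat rat_of_int (adj_mat A) * map_mat rat_of_int A = 1\<^sub>m n"
    by (simp add: of_int_hom.mat_hom_mult[symmetric, OF adj(3) A] adj of_int_hom.mat_hom_one)
qed (use A unimodular_adj_mat(3)[OF A det] in auto)

definition extend_mat :: "'a::semiring_1 mat \<Rightarrow> 'a mat" where
  "extend_mat M = four_block_mat M (0\<^sub>m (dim_row M) 1) (0\<^sub>m 1 (dim_col M)) (1\<^sub>m 1)"

lemma extend_mat_carrier: "M \<in> carrier_mat n m \<Longrightarrow> extend_mat M \<in> carrier_mat (Suc n) (Suc m)"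
  unfolding extend_mat_def by auto

lemma extend_mat_mult:
  assumes "M \<in> carrier_mat n k" "N \<in> carrier_mat k m"
  shows "extend_mat M * extend_mat N = extend_mat (M * N)"
proof -
  have dims: "dim_row M = n" "dim_col M = k" "dim_row N = k" "dim_col N = m"
    "dim_row (M * N) = n" "dim_col (M * N) = m"
    using assms by auto
  show ?thesis
    unfolding extend_mat_def dims
    by (subst mult_four_block_mat[OF assms(1) zero_carrier_mat zero_carrier_mat one_carrier_mat
          assms(2) zero_carrier_mat zero_carrier_mat one_carrier_mat]) (use assms in auto)
qed

lemma extend_mat_one: "extend_mat (1\<^sub>m n) = 1\<^sub>m (Suc n)"
  unfolding extend_mat_def using four_block_one_mat[of n 1] by simp

lemma of_int_extend_mat: "map_mat of_int (extend_mat M) = extend_mat (map_mat of_int M)"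
  unfolding extend_mat_def by (rule eq_matI) auto

lemma det_extend_mat: "M \<in> carrier_mat n n \<Longrightarrow> det (extend_mat M) = det (M :: 'a::idom mat)"
  unfolding extend_mat_def by (subst det_four_block_mat_lower_left_zero[of _ n _ 1]) auto

lemma extend_mat_mult_vec:
  assumes "M \<in> carrier_mat n m" "w \<in> carrier_vec m"
  shows "extend_mat M *\<^sub>v (w @\<^sub>v 0\<^sub>v 1) = (M *\<^sub>v w) @\<^sub>v 0\<^sub>v 1"
  unfolding extend_mat_def using assms
  by (subst four_block_mat_mult_vec[of M n m _ 1 _ 1]) auto

lemma foldr_mult_carrier:
  assumes "\<And>k. k \<in> set ks \<Longrightarrow> X k \<in> carrier_mat n n" "C \<in> carrier_mat n n"
  shows "foldr (\<lambda>k M. X k * M) ks C \<in> carrier_mat n n"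
  using assms by (induction ks) (auto intro!: mult_carrier_mat[of _ n n])

lemma foldr_extend_mat:
  assumes "\<And>k. k \<in> set ks \<Longrightarrow> X k \<in> carrier_mat n n" "C \<in> carrier_mat (Suc n) (Suc n)"
  shows "foldr (\<lambda>k M. extend_mat (X k) * M) ks C
    = extend_mat (foldr (\<lambda>k M. X k * M) ks (1\<^sub>m n)) * C"
  using assms
proof (induction ks)
  case Nil
  then show ?case by (simp add: extend_mat_one)
next
  case (Cons k ks)
  let ?F = "foldr (\<lambda>k M. X k * M) ks (1\<^sub>m n)"
  have F: "?F \<in> carrier_mat n n" and Xk: "X k \<in> carrier_mat n n"
    using Cons.prems by (auto intro: foldr_mult_carrier)
  have "foldr (\<lambda>k M. extend_mat (X k) * M) (k # ks) C = extend_mat (X k) * (extend_mat ?F * C)"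
    using Cons by simp
  also have "\<dots> = (extend_mat (X k) * extend_mat ?F) * C"
    using extend_mat_carrier[OF Xk] extend_mat_carrier[OF F] Cons.prems(2)
    by (simp add: assoc_mult_mat)
  finally show ?case by (simp add: extend_mat_mult[OF Xk F])
qed

section \<open>Cylinders in the space of integer sequences\<close>

definition cylinder :: "(nat \<Rightarrow> 'a) \<Rightarrow> nat \<Rightarrow> (nat \<Rightarrow> 'a) set" where
  "cylinder y N = {z. \<forall>l\<le>N. z l = y l}"

lemma cylinder_self [simp]: "y \<in> cylinder y N"
  unfolding cylinder_def by simp

lemma open_cylinder: "open (cylinder (y :: nat \<Rightarrow> 'a::discrete_topology) N)"
proof -
  have "cylinder y N = {z. \<forall>i\<in>{..N}. z (id i) \<in> {y i}}"
    unfolding cylinder_def by auto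
  then show ?thesis
    using product_topology_basis'[of "{..N}" "\<lambda>i. {y i}" id] by (simp add: open_discrete)
qed

lemma open_contains_cylinder:
  assumes A: "open (A :: (nat \<Rightarrow> 'a::topological_space) set)" and y: "y \<in> A"
  obtains N where "cylinder y N \<subseteq> A"
proof -
  have "openin (product_topology (\<lambda>i. euclidean) UNIV) A"
    using A unfolding open_fun_def .
  from product_topology_open_contains_basis[OF this y] obtain X where
    X: "y \<in> (\<Pi>\<^sub>E i\<in>UNIV. X i)" "finite {i. X i \<noteq> topspace euclidean}" "(\<Pi>\<^sub>E i\<in>UNIV. X i) \<subseteq> A"
    by blast
  define N where "N = Max (insert 0 {i. X i \<noteq> UNIV})"
  have "cylinder y N \<subseteq> (\<Pi>\<^sub>E i\<in>UNIV. X i)"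
  proof
    fix z assume z: "z \<in> cylinder y N"
    have "z i \<in> X i" for i
    proof (cases "X i = UNIV")
      case False
      then have "i \<le> N" unfolding N_def using X(2) by simp
      then show ?thesis using z X(1) unfolding cylinder_def by auto
    qed simp
    then show "z \<in> (\<Pi>\<^sub>E i\<in>UNIV. X i)" by (simp add: PiE_UNIV_domain)
  qed
  with X(3) have "cylinder y N \<subseteq> A" by (rule order.trans[rotated])
  then show thesis by (rule that)
qed

lemma open_coordinate_determined:
  assumes "\<And>x z. (\<forall>l\<le>N. x l = z l) \<Longrightarrow> x \<in> S \<Longrightarrow> z \<in> S"
  shows "open (S :: (nat \<Rightarrow> 'a::discrete_topology) set)"
proof -
  have "S = (\<Union>y\<in>S. cylinder y N)"
  proof
    show "(\<Union>y\<in>S. cylinder y N) \<subseteq> S"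
    proof
      fix z assume "z \<in> (\<Union>y\<in>S. cylinder y N)"
      then obtain y where "y \<in> S" "\<forall>l\<le>N. y l = z l" by (auto simp: cylinder_def)
      then show "z \<in> S" using assms by blast
    qed
  qed auto
  then show ?thesis using open_cylinder by (metis open_UN)
qed

lemma closed_coordinate_determined:
  assumes "\<And>x z. (\<forall>l\<le>N. x l = z l) \<Longrightarrow> x \<in> S \<Longrightarrow> z \<in> S"
  shows "closed (S :: (nat \<Rightarrow> 'a::discrete_topology) set)"
  unfolding closed_def
proof (rule open_coordinate_determined[of N])
  fix x z assume "\<forall>l\<le>N. x l = z l" "x \<in> - S"
  then show "z \<in> - S" using assms[of z x] by auto
qed

lemma compact_bounded_sequences: "compact {x :: nat \<Rightarrow> nat. \<forall>n. x n \<le> b n}"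
proof -
  have "compactin (product_topology (\<lambda>i. euclidean) UNIV) (\<Pi>\<^sub>E i\<in>UNIV. {..b i})"
    unfolding compactin_PiE by (simp add: finite_imp_compact)
  moreover have "(\<Pi>\<^sub>E i\<in>UNIV. {..b i}) = {x. \<forall>n. x n \<le> b n}"
    by (auto simp: PiE_UNIV_domain)
  ultimately show ?thesis
    unfolding euclidean_product_topology by simp
qed

lemma compact_Xmin: "compact (Xmin E)"
proof -
  have "Xmin E = {x. \<forall>n. x n \<le> n} \<inter> (\<Inter>n. {x. x 0 = 0 \<and> 0 < E n (x (Suc n)) (x n)})"
    unfolding Xmin_def by auto
  moreover have "closed {x :: nat \<Rightarrow> nat. x 0 = 0 \<and> 0 < E n (x (Suc n)) (x n)}" for n
    by (rule closed_coordinate_determined[of "Suc n"]) simp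
  ultimately show ?thesis
    using compact_Int_closed[OF compact_bounded_sequences] by (simp add: closed_INT)
qed

lemma continuous_on_chiB: "continuous_on S (chiB i n :: _ \<Rightarrow> 'a::{zero_neq_one,topological_space})"
proof -
  have "chiB i n = (\<lambda>k::nat. if k = i then 1 else 0 :: 'a) \<circ> (\<lambda>x. x n)"
    by (auto simp: chiB_def)
  moreover have "continuous_on S (\<lambda>x::nat \<Rightarrow> nat. x n)"
    by (rule continuous_on_subset[OF continuous_on_product_coordinates]) simp
  ultimately show ?thesis
    by (metis continuous_on_compose continuous_on_discrete)
qed

lemma continuous_on_locally_cylinder_constant:
  fixes f :: "(nat \<Rightarrow> 'a::topological_space) \<Rightarrow> 'b::discrete_topology"
  assumes f: "continuous_on S f" and x: "x \<in> S"
  shows "\<exists>N. \<forall>z\<in>S. z \<in> cylinder x N \<longrightarrow> f z = f x"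
proof -
  obtain A where A: "open A" "A \<inter> S = f -` {f x} \<inter> S"
    using f open_discrete[of "{f x}"] unfolding continuous_on_open_invariant by blast
  have "x \<in> A" using A(2) x by blast
  then obtain N where "cylinder x N \<subseteq> A" using open_contains_cylinder[OF A(1)] by blast
  then show ?thesis using A(2) by blast
qed

lemma continuous_on_compact_cylinder_constant:
  fixes f :: "(nat \<Rightarrow> 'a::discrete_topology) \<Rightarrow> 'b::discrete_topology"
  assumes S: "compact S" and f: "continuous_on S f"
  obtains N where "\<And>x y. x \<in> S \<Longrightarrow> y \<in> S \<Longrightarrow> (\<forall>l\<le>N. x l = y l) \<Longrightarrow> f x = f y"
proof -
  have "\<forall>x\<in>S. \<exists>N. \<forall>z\<in>S. z \<in> cylinder x N \<longrightarrow> f z = f x"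
    using continuous_on_locally_cylinder_constant[OF f] by blast
  from bchoice[OF this] obtain d where d: "\<forall>x\<in>S. \<forall>z\<in>S. z \<in> cylinder x (d x) \<longrightarrow> f z = f x"
    by blast
  have cover: "S \<subseteq> (\<Union>x\<in>S. cylinder x (d x))" by auto
  obtain C where C: "C \<subseteq> S" "finite C" "S \<subseteq> (\<Union>x\<in>C. cylinder x (d x))"
    by (rule compactE_image[OF S _ cover]) (rule open_cylinder)
  define N where "N = Max (insert 0 (d ` C))"
  have "f y = f z" if y: "y \<in> S" and z: "z \<in> S" and yz: "\<forall>l\<le>N. y l = z l" for y z
  proof -
    obtain x where x: "x \<in> C" "y \<in> cylinder x (d x)" using C(3) y by blast
    have "d x \<le> N" unfolding N_def using C(2) x(1) by simp
    then have zx: "z \<in> cylinder x (d x)" using x(2) yz unfolding cylinder_def by auto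
    have "x \<in> S" using C(1) x(1) by blast
    then show "f y = f z" using d[rule_format, OF _ y x(2)] d[rule_format, OF _ z zx] by simp
  qed
  then show thesis by (rule that)
qed

section \<open>The direct limit\<close>

locale K0_system =
  fixes Abar :: "nat \<Rightarrow> int mat"
  assumes dims: "\<And>n. Abar n \<in> carrier_mat (n+2) (n+1)"
begin

definition K0_pairs :: "(nat \<times> int vec) set" where
  "K0_pairs = (SIGMA n:UNIV. carrier_vec (n+1))"

lemma phi_iter_carrier:
  assumes "v \<in> carrier_vec (n+1)" "n \<le> k"
  shows "phi_iter Abar n (k-n) v \<in> carrier_vec (k+1)"
proof -
  have "phi_iter Abar n d v \<in> carrier_vec (n+d+1)" for d
  proof (induction d)
    case (Suc d)
    then show ?case using mult_mat_vec_carrier[OF dims[of "n+d"]] by simp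
  qed (use assms(1) in simp)
  from this[of "k-n"] show ?thesis using assms(2) by simp
qed

lemma phi_iter_add: "phi_iter Abar n (a+b) v = phi_iter Abar (n+a) b (phi_iter Abar n a v)"
  by (induction b) (auto simp: add.assoc)

lemma phi_iter_diff_trans:
  assumes "n \<le> k" "k \<le> k'"
  shows "phi_iter Abar n (k'-n) v = phi_iter Abar k (k'-k) (phi_iter Abar n (k-n) v)"
  using phi_iter_add[of n "k-n" "k'-k" v] assms by simp

lemma K0relE:
  assumes "((n,v),(m,w)) \<in> K0rel Abar"
  obtains k where "n \<le> k" "m \<le> k"
    "\<And>k'. k \<le> k' \<Longrightarrow> phi_iter Abar n (k'-n) v = phi_iter Abar m (k'-m) w"
proof -
  obtain k where k: "n \<le> k" "m \<le> k" "phi_iter Abar n (k-n) v = phi_iter Abar m (k-m) w"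
    using assms unfolding K0rel_def by blast
  show thesis
    by (rule that[OF k(1,2)]) (use k phi_iter_diff_trans in \<open>metis order.trans\<close>)
qed

lemma K0rel_trans:
  assumes "((n,u),(m,v)) \<in> K0rel Abar" "((m,v),(l,w)) \<in> K0rel Abar"
  shows "((n,u),(l,w)) \<in> K0rel Abar"
proof -
  obtain k1 where k1: "n \<le> k1" "\<And>k'. k1 \<le> k' \<Longrightarrow> phi_iter Abar n (k'-n) u = phi_iter Abar m (k'-m) v"
    using K0relE[OF assms(1)] by metis
  obtain k2 where k2: "l \<le> k2" "\<And>k'. k2 \<le> k' \<Longrightarrow> phi_iter Abar m (k'-m) v = phi_iter Abar l (k'-l) w"
    using K0relE[OF assms(2)] by metis
  have "phi_iter Abar n (max k1 k2 - n) u = phi_iter Abar l (max k1 k2 - l) w"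
    using k1(2) k2(2) by simp
  with assms k1(1) k2(1) show ?thesis
    unfolding K0rel_def by (auto intro!: exI[of _ "max k1 k2"])
qed

lemma equiv_K0rel: "equiv K0_pairs (K0rel Abar)"
proof (rule equivI)
  show "K0rel Abar \<subseteq> K0_pairs \<times> K0_pairs"
    by (auto simp: K0rel_def K0_pairs_def)
  show "refl_on K0_pairs (K0rel Abar)"
    by (rule refl_onI) (auto simp: K0rel_def K0_pairs_def)
  show "sym (K0rel Abar)"
    by (rule symI) (auto simp: K0rel_def)
  show "trans (K0rel Abar)"
    by (rule transI) (metis K0rel_trans surj_pair)
qed

lemma iota_in_K0: "v \<in> carrier_vec (n+1) \<Longrightarrow> iota Abar n v \<in> K0 Abar"
  unfolding iota_def K0_def K0_pairs_def[symmetric] by (rule quotientI) (simp add: K0_pairs_def)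

lemma iota_eq_iff:
  assumes "v \<in> carrier_vec (n+1)" "w \<in> carrier_vec (m+1)"
  shows "iota Abar n v = iota Abar m w \<longleftrightarrow> ((n,v),(m,w)) \<in> K0rel Abar"
  unfolding iota_def using equiv_class_eq_iff[OF equiv_K0rel, of "(n,v)" "(m,w)"] assms
  by (auto simp: K0_pairs_def)

lemma iota_Suc:
  assumes "v \<in> carrier_vec (n+1)"
  shows "iota Abar (Suc n) (Abar n *\<^sub>v v) = iota Abar n v"
proof -
  have "Abar n *\<^sub>v v \<in> carrier_vec (Suc n + 1)" using dims[of n] assms by simp
  moreover have "((n,v),(Suc n, Abar n *\<^sub>v v)) \<in> K0rel Abar"
    using assms dims[of n] unfolding K0rel_def by (auto intro!: exI[of _ "Suc n"])
  ultimately show ?thesis using iota_eq_iff assms by metis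
qed

lemma K0_some_elem:
  assumes "X \<in> K0 Abar"
  shows "snd (some_elem X) \<in> carrier_vec (fst (some_elem X) + 1)"
    and "X = iota Abar (fst (some_elem X)) (snd (some_elem X))"
proof -
  obtain p where p: "p \<in> K0_pairs" "X = K0rel Abar `` {p}"
    using assms unfolding K0_def K0_pairs_def[symmetric] by (rule quotientE)
  then have "some_elem X \<in> X"
    using equiv_class_self[OF equiv_K0rel] by (metis empty_iff some_elem_nonempty)
  then have "(p, some_elem X) \<in> K0rel Abar" using p(2) by simp
  then have "some_elem X \<in> K0_pairs" and "X = K0rel Abar `` {some_elem X}"
    using equiv_class_eq[OF equiv_K0rel] equiv_type[OF equiv_K0rel] p(2) by blast+
  then show "snd (some_elem X) \<in> carrier_vec (fst (some_elem X) + 1)"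
    and "X = iota Abar (fst (some_elem X)) (snd (some_elem X))"
    unfolding iota_def K0_pairs_def by auto
qed

lemma K0add_some_elem:
  assumes "some_elem X = (n,v)" "some_elem Y = (m,w)"
  shows "K0add Abar X Y
    = iota Abar (max n m) (phi_iter Abar n (max n m - n) v + phi_iter Abar m (max n m - m) w)"
  using assms unfolding K0add_def some_elem_def[symmetric] by (simp add: Let_def)

definition compatible :: "(nat \<Rightarrow> int vec \<Rightarrow> 'b) \<Rightarrow> bool" where
  "compatible F \<longleftrightarrow> (\<forall>n. \<forall>v\<in>carrier_vec (n+1). F (Suc n) (Abar n *\<^sub>v v) = F n v)"

lemma compatible_phi_iter:
  assumes F: "compatible F" and v: "v \<in> carrier_vec (n+1)" and "n \<le> k"
  shows "F k (phi_iter Abar n (k-n) v) = F n v"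
proof -
  have "F (n+d) (phi_iter Abar n d v) = F n v" for d
  proof (induction d)
    case (Suc d)
    have "phi_iter Abar n d v \<in> carrier_vec (n+d+1)"
      using phi_iter_carrier[OF v, of "n+d"] by simp
    then show ?case using F Suc.IH by (simp add: compatible_def)
  qed simp
  from this[of "k-n"] show ?thesis using assms(3) by simp
qed

lemma compatible_K0rel:
  assumes F: "compatible F" and rel: "((n,v),(m,w)) \<in> K0rel Abar"
  shows "F n v = F m w"
proof -
  obtain k where k: "n \<le> k" "m \<le> k" "phi_iter Abar n (k-n) v = phi_iter Abar m (k-m) w"
    using rel unfolding K0rel_def by blast
  have "v \<in> carrier_vec (n+1)" "w \<in> carrier_vec (m+1)"
    using rel unfolding K0rel_def by auto
  then show ?thesis
    using compatible_phi_iter[OF F] k by metis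
qed

definition K0_induced :: "(nat \<Rightarrow> int vec \<Rightarrow> 'b) \<Rightarrow> (nat \<times> int vec) set \<Rightarrow> 'b" where
  "K0_induced F X = case_prod F (some_elem X)"

lemma K0_induced_iota:
  assumes F: "compatible F" and v: "v \<in> carrier_vec (n+1)"
  shows "K0_induced F (iota Abar n v) = F n v"
proof -
  let ?p = "some_elem (iota Abar n v)"
  note rep = K0_some_elem[OF iota_in_K0[OF v]]
  have "((n,v), ?p) \<in> K0rel Abar"
    using iota_eq_iff[OF v rep(1)] rep(2) by simp
  then show ?thesis
    unfolding K0_induced_def using compatible_K0rel[OF F] by (metis prod.collapse split_beta)
qed

lemma K0_induced_unique:
  assumes "\<And>n v. v \<in> carrier_vec (n+1) \<Longrightarrow> \<Psi> (iota Abar n v) = F n v" and "X \<in> K0 Abar"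
  shows "\<Psi> X = K0_induced F X"
  using assms K0_some_elem[OF assms(2)] unfolding K0_induced_def by (metis split_beta)

lemma K0add_closed:
  assumes "X \<in> K0 Abar" "Y \<in> K0 Abar"
  shows "K0add Abar X Y \<in> K0 Abar"
  using K0add_some_elem[of X _ _ Y] K0_some_elem(1)[OF assms(1)] K0_some_elem(1)[OF assms(2)]
  by (metis iota_in_K0 add_carrier_vec phi_iter_carrier max.cobounded1 max.cobounded2 prod.collapse)

lemma K0_induced_add:
  fixes F :: "nat \<Rightarrow> int vec \<Rightarrow> 'c \<Rightarrow> 'd::plus"
  assumes F: "compatible F"
    and add: "\<And>n v w. v \<in> carrier_vec (n+1) \<Longrightarrow> w \<in> carrier_vec (n+1) \<Longrightarrow>
      F n (v + w) = (\<lambda>x. F n v x + F n w x)"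
    and X: "X \<in> K0 Abar" and Y: "Y \<in> K0 Abar"
  shows "K0_induced F (K0add Abar X Y) = (\<lambda>x. K0_induced F X x + K0_induced F Y x)"
proof -
  obtain n v m w where p: "some_elem X = (n,v)" "some_elem Y = (m,w)" by fastforce
  have v: "v \<in> carrier_vec (n+1)" and w: "w \<in> carrier_vec (m+1)"
    using K0_some_elem(1)[OF X] K0_some_elem(1)[OF Y] p by auto
  let ?k = "max n m"
  have lift: "phi_iter Abar n (?k-n) v \<in> carrier_vec (?k+1)" "phi_iter Abar m (?k-m) w \<in> carrier_vec (?k+1)"
    using phi_iter_carrier v w by auto
  have "K0_induced F (K0add Abar X Y) = F ?k (phi_iter Abar n (?k-n) v + phi_iter Abar m (?k-m) w)"
    unfolding K0add_some_elem[OF p] using lift by (simp add: K0_induced_iota[OF F])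
  also have "\<dots> = (\<lambda>x. F n v x + F m w x)"
    using add[OF lift] compatible_phi_iter[OF F] v w by simp
  finally show ?thesis unfolding K0_induced_def p by simp
qed

lemma inj_on_K0_induced:
  assumes F: "compatible F" and inj: "\<And>n. inj_on (F n) (carrier_vec (n+1))"
  shows "inj_on (K0_induced F) (K0 Abar)"
proof (rule inj_onI)
  fix X Y assume X: "X \<in> K0 Abar" and Y: "Y \<in> K0 Abar" and eq: "K0_induced F X = K0_induced F Y"
  obtain n v m w where p: "some_elem X = (n,v)" "some_elem Y = (m,w)" by fastforce
  have v: "v \<in> carrier_vec (n+1)" and w: "w \<in> carrier_vec (m+1)"
    using K0_some_elem(1)[OF X] K0_some_elem(1)[OF Y] p by auto
  let ?k = "max n m"
  have lift: "phi_iter Abar n (?k-n) v \<in> carrier_vec (?k+1)" "phi_iter Abar m (?k-m) w \<in> carrier_vec (?k+1)"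
    using phi_iter_carrier v w by auto
  have "F ?k (phi_iter Abar n (?k-n) v) = F ?k (phi_iter Abar m (?k-m) w)"
    using eq compatible_phi_iter[OF F] v w unfolding K0_induced_def p by simp
  then have "phi_iter Abar n (?k-n) v = phi_iter Abar m (?k-m) w"
    using inj_onD[OF inj _ lift] by blast
  then have "iota Abar n v = iota Abar m w"
    using iota_eq_iff[OF v w] v w unfolding K0rel_def by auto
  then show "X = Y" using K0_some_elem(2)[OF X] K0_some_elem(2)[OF Y] p by simp
qed

lemma K0_induced_image:
  assumes F: "compatible F"
  shows "K0_induced F ` K0 Abar = (\<Union>n. F n ` carrier_vec (n+1))"
proof
  show "K0_induced F ` K0 Abar \<subseteq> (\<Union>n. F n ` carrier_vec (n+1))"
    using K0_some_elem(1) unfolding K0_induced_def by (fastforce simp: split_beta)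
  show "(\<Union>n. F n ` carrier_vec (n+1)) \<subseteq> K0_induced F ` K0 Abar"
  proof (clarify)
    fix n and v :: "int vec" assume "v \<in> carrier_vec (n+1)"
    then show "F n v \<in> K0_induced F ` K0 Abar"
      using K0_induced_iota[OF F] iota_in_K0 by (metis image_eqI)
  qed
qed

lemma iso_K0grpI:
  fixes F :: "nat \<Rightarrow> int vec \<Rightarrow> 'c \<Rightarrow> 'd::plus"
  assumes F: "compatible F"
    and add: "\<And>n v w. v \<in> carrier_vec (n+1) \<Longrightarrow> w \<in> carrier_vec (n+1) \<Longrightarrow>
      F n (v + w) = (\<lambda>x. F n v x + F n w x)"
    and inj: "\<And>n. inj_on (F n) (carrier_vec (n+1))"
    and H: "carrier H = (\<Union>n. F n ` carrier_vec (n+1))" "\<And>a b. a \<otimes>\<^bsub>H\<^esub> b = (\<lambda>x. a x + b x)"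
    and \<Psi>: "\<And>n v. v \<in> carrier_vec (n+1) \<Longrightarrow> \<Psi> (iota Abar n v) = F n v"
  shows "\<Psi> \<in> iso (K0grp Abar) H"
proof -
  have eq: "\<And>X. X \<in> K0 Abar \<Longrightarrow> \<Psi> X = K0_induced F X"
    using K0_induced_unique[of \<Psi> F] \<Psi> by blast
  have "\<Psi> X \<in> carrier H" if "X \<in> K0 Abar" for X
    using K0_induced_image[OF F] H(1) eq[OF that] that by blast
  then have "\<Psi> \<in> hom (K0grp Abar) H"
    using K0_induced_add[OF F add] K0add_closed H(2) by (auto simp: hom_def K0grp_def eq)
  moreover have "bij_betw \<Psi> (K0 Abar) (carrier H)"
    using inj_on_K0_induced[OF F inj] K0_induced_image[OF F] H(1)
    by (simp add: bij_betw_def inj_on_cong[OF eq] image_cong[OF refl eq])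
  ultimately show ?thesis unfolding iso_def K0grp_def by simp
qed

end

section \<open>Unimodular completions\<close>

locale unimodular_completion = K0_system +
  fixes c :: "nat \<Rightarrow> int vec"
  assumes det1: "\<And>n. det (Acomp Abar c n) = 1"
begin

definition Acomp_int :: "nat \<Rightarrow> int mat" where
  "Acomp_int n = mat (n+2) (n+2) (\<lambda>(i,j). if j < n+1 then Abar n $$ (i,j) else c n $ i)"

lemma Acomp_int_carrier: "Acomp_int n \<in> carrier_mat (n+2) (n+2)"
  unfolding Acomp_int_def by simp

lemma Acomp_eq_of_int: "Acomp Abar c n = map_mat rat_of_int (Acomp_int n)"
  unfolding Acomp_int_def Acomp_def by (rule eq_matI) auto

lemma det_Acomp_int: "det (Acomp_int n) = 1"
  using det1[of n] unfolding Acomp_eq_of_int of_int_hom.hom_det by simp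

lemmas Acomp_int_inverse = unimodular_adj_mat[OF Acomp_int_carrier det_Acomp_int]

lemma minv_Acomp: "minv (Acomp Abar c n) = map_mat rat_of_int (adj_mat (Acomp_int n))"
  unfolding Acomp_eq_of_int by (rule minv_of_int_unimodular[OF Acomp_int_carrier det_Acomp_int])

lemma Acomp_int_mult_extend_vec:
  assumes v: "v \<in> carrier_vec (n+1)"
  shows "Acomp_int n *\<^sub>v (v @\<^sub>v 0\<^sub>v 1) = Abar n *\<^sub>v v"
proof (rule eq_vecI)
  fix i assume "i < dim_vec (Abar n *\<^sub>v v)"
  then have i: "i < n+2" using dims[of n] by simp
  have "(Acomp_int n *\<^sub>v (v @\<^sub>v 0\<^sub>v 1)) $ i = (\<Sum>j<n+2. Acomp_int n $$ (i,j) * (v @\<^sub>v 0\<^sub>v 1) $ j)"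
    using i v by (simp add: Acomp_int_def scalar_prod_def atLeast0LessThan)
  also have "\<dots> = (\<Sum>j<n+1. Abar n $$ (i,j) * v $ j)"
    using i v by (simp add: Acomp_int_def)
  also have "\<dots> = (Abar n *\<^sub>v v) $ i"
    using i v dims[of n] by (simp add: scalar_prod_def atLeast0LessThan)
  finally show "(Acomp_int n *\<^sub>v (v @\<^sub>v 0\<^sub>v 1)) $ i = (Abar n *\<^sub>v v) $ i" .
qed (use dims[of n] in \<open>simp add: Acomp_int_def\<close>)

lemma adj_Acomp_int_mult_Abar:
  assumes v: "v \<in> carrier_vec (n+1)"
  shows "adj_mat (Acomp_int n) *\<^sub>v (Abar n *\<^sub>v v) = v @\<^sub>v 0\<^sub>v 1"
proof -
  have v': "v @\<^sub>v 0\<^sub>v 1 \<in> carrier_vec (n+2)"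
    using append_carrier_vec[OF v zero_carrier_vec[of 1]] by simp
  have "adj_mat (Acomp_int n) *\<^sub>v (Abar n *\<^sub>v v)
      = (adj_mat (Acomp_int n) * Acomp_int n) *\<^sub>v (v @\<^sub>v 0\<^sub>v 1)"
    unfolding Acomp_int_mult_extend_vec[OF v, symmetric]
    by (rule assoc_mult_mat_vec[symmetric, of _ "n+2" "n+2" _ "n+2"])
      (use Acomp_int_carrier Acomp_int_inverse(3) v' in auto)
  also have "\<dots> = v @\<^sub>v 0\<^sub>v 1" using Acomp_int_inverse(2) v' by simp
  finally show ?thesis .
qed

lemma Ablk_carrier: "k < n \<Longrightarrow> Ablk Abar c n k \<in> carrier_mat (n+1) (n+1)"
  unfolding Ablk_def minv_Acomp using Acomp_int_inverse(3)[of k] by auto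

lemma Ablk_last: "Ablk Abar c (Suc n) n = minv (Acomp Abar c n)"
  unfolding Ablk_def minv_Acomp using Acomp_int_inverse(3)[of n] by (intro eq_matI) auto

lemma Ablk_Suc: "k < n \<Longrightarrow> Ablk Abar c (Suc n) k = extend_mat (Ablk Abar c n k)"
  unfolding Ablk_def extend_mat_def minv_Acomp using Acomp_int_inverse(3)[of k]
  by (intro eq_matI) auto

lemma Amat_Suc: "Amat Abar c (Suc n) = extend_mat (Amat Abar c n) * minv (Acomp Abar c n)"
proof -
  have minv: "minv (Acomp Abar c n) \<in> carrier_mat (n+2) (n+2)"
    unfolding minv_Acomp using Acomp_int_inverse(3)[of n] by simp
  have "Amat Abar c (Suc n)
      = foldr (\<lambda>k M. Ablk Abar c (Suc n) k * M) [0..<n] (minv (Acomp Abar c n))"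
    unfolding Amat_def using minv by (simp add: Ablk_last)
  also have "\<dots> = foldr (\<lambda>k M. extend_mat (Ablk Abar c n k) * M) [0..<n] (minv (Acomp Abar c n))"
    by (rule foldr_cong) (auto simp: Ablk_Suc)
  also have "\<dots> = extend_mat (Amat Abar c n) * minv (Acomp Abar c n)"
    unfolding Amat_def using minv by (subst foldr_extend_mat) (use Ablk_carrier in auto)
  finally show ?thesis .
qed

fun Amat_int :: "nat \<Rightarrow> int mat" where
  "Amat_int 0 = 1\<^sub>m 1"
| "Amat_int (Suc n) = extend_mat (Amat_int n) * adj_mat (Acomp_int n)"

lemma Amat_int_carrier: "Amat_int n \<in> carrier_mat (n+1) (n+1)"
proof (induction n)
  case (Suc n)
  have "extend_mat (Amat_int n) \<in> carrier_mat (n+2) (n+2)"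
    using extend_mat_carrier[OF Suc] by simp
  from mult_carrier_mat[OF this Acomp_int_inverse(3)] show ?case by simp
qed simp

lemma extend_Amat_int_carrier: "extend_mat (Amat_int n) \<in> carrier_mat (n+2) (n+2)"
  using extend_mat_carrier[OF Amat_int_carrier] by simp

lemma det_Amat_int: "det (Amat_int n) = 1"
proof (induction n)
  case (Suc n)
  have "det (Amat_int (Suc n)) = det (extend_mat (Amat_int n)) * det (adj_mat (Acomp_int n))"
    using det_mult[OF extend_Amat_int_carrier Acomp_int_inverse(3)] by simp
  then show ?case
    using Suc det_extend_mat[OF Amat_int_carrier] Acomp_int_inverse(4) by simp
qed simp

lemmas Amat_int_inverse = unimodular_adj_mat[OF Amat_int_carrier det_Amat_int]

lemma Amat_eq_of_int: "Amat Abar c n = map_mat rat_of_int (Amat_int n)"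
proof (induction n)
  case 0
  then show ?case by (simp add: Amat_def of_int_hom.mat_hom_one)
next
  case (Suc n)
  show ?case
    unfolding Amat_Suc Suc Amat_int.simps minv_Acomp of_int_extend_mat[symmetric]
    by (rule of_int_hom.mat_hom_mult[symmetric,
          OF extend_Amat_int_carrier Acomp_int_inverse(3)])
qed

lemma Amat_int_mult_vec_cancel:
  assumes v: "v \<in> carrier_vec (n+1)" and w: "w \<in> carrier_vec (n+1)"
    and eq: "Amat_int n *\<^sub>v v = Amat_int n *\<^sub>v w"
  shows "v = w"
proof -
  have "adj_mat (Amat_int n) *\<^sub>v (Amat_int n *\<^sub>v u) = u" if "u \<in> carrier_vec (n+1)" for u
    using assoc_mult_mat_vec[OF Amat_int_inverse(3) Amat_int_carrier that] Amat_int_inverse(2) that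
    by simp
  then show ?thesis using v w eq by metis
qed

lemma Amat_int_mult_adj_mat: "u \<in> carrier_vec (n+1) \<Longrightarrow> Amat_int n *\<^sub>v (adj_mat (Amat_int n) *\<^sub>v u) = u"
  using assoc_mult_mat_vec[OF Amat_int_carrier Amat_int_inverse(3)] Amat_int_inverse(1) by simp

lemma Gset_eq_Ints: "Gset Abar c = \<int>"
proof -
  have "det (minv (Amat Abar c n)) = 1" for n
    unfolding Amat_eq_of_int minv_of_int_unimodular[OF Amat_int_carrier det_Amat_int]
      of_int_hom.hom_det using Amat_int_inverse(4) by simp
  then show ?thesis unfolding Gset_def Ints_def by auto
qed

lemma Amat_int_Suc_mult_Abar:
  assumes v: "v \<in> carrier_vec (n+1)"
  shows "Amat_int (Suc n) *\<^sub>v (Abar n *\<^sub>v v) = (Amat_int n *\<^sub>v v) @\<^sub>v 0\<^sub>v 1"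
proof -
  have "Amat_int (Suc n) *\<^sub>v (Abar n *\<^sub>v v)
      = extend_mat (Amat_int n) *\<^sub>v (adj_mat (Acomp_int n) *\<^sub>v (Abar n *\<^sub>v v))"
    unfolding Amat_int.simps
    using extend_Amat_int_carrier Acomp_int_inverse(3) dims[of n] v
    by (subst assoc_mult_mat_vec[of _ "n+2" "n+2" _ "n+2"]) auto
  then show ?thesis
    using adj_Acomp_int_mult_Abar[OF v] extend_mat_mult_vec[OF Amat_int_carrier v] by simp
qed

end

section \<open>Paths of a minimal reduction\<close>

locale min_reduction =
  fixes E :: "nat \<Rightarrow> nat \<Rightarrow> nat \<Rightarrow> nat"
  assumes one_parent: "\<And>n i. i \<le> n+1 \<Longrightarrow> (\<Sum>j\<le>n. E n i j) = 1"
    and has_child: "\<And>n j. j \<le> n \<Longrightarrow> \<exists>i\<le>n+1. 0 < E n i j"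
begin

definition children :: "nat \<Rightarrow> nat \<Rightarrow> nat set" where
  "children n j = {i. i \<le> n+1 \<and> 0 < E n i j}"

lemma unique_parent_edge:
  assumes "i \<le> n+1"
  obtains j where "j \<le> n" "E n i j = 1" "\<And>j'. j' \<le> n \<Longrightarrow> j' \<noteq> j \<Longrightarrow> E n i j' = 0"
  using one_parent[OF assms] sum_eq_Suc0_iff[of "{..n}" "E n i"] that by auto

lemma parent_unique:
  assumes "i \<in> children n j" "i \<in> children n j'" "j \<le> n" "j' \<le> n"
  shows "j = j'"
proof -
  have i: "i \<le> n+1" "0 < E n i j" "0 < E n i j'"
    using assms(1,2) by (simp_all add: children_def)
  obtain k where "\<And>l. l \<le> n \<Longrightarrow> l \<noteq> k \<Longrightarrow> E n i l = 0"
    using unique_parent_edge[OF i(1)] by blast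
  then show ?thesis using i(2,3) assms(3,4) by (cases "j = k"; cases "j' = k") auto
qed

lemma parent_exists: "i \<le> n+1 \<Longrightarrow> \<exists>j\<le>n. i \<in> children n j"
  using unique_parent_edge[of i n] unfolding children_def by fastforce

lemma children_le: "i \<in> children n j \<Longrightarrow> i \<le> n+1"
  unfolding children_def by simp

lemma finite_children: "finite (children n j)"
  unfolding children_def by simp

lemma children_nonempty: "j \<le> n \<Longrightarrow> children n j \<noteq> {}"
  unfolding children_def using has_child by blast

lemma card_children: "j \<le> n \<Longrightarrow> card (children n j) = (\<Sum>i\<le>n+1. E n i j)"
proof -
  assume j: "j \<le> n"
  have E01: "E n i j = (if i \<in> children n j then 1 else 0)" if i: "i \<le> n+1" for i
  proof -
    obtain k where "k \<le> n" "E n i k = 1" "\<And>l. l \<le> n \<Longrightarrow> l \<noteq> k \<Longrightarrow> E n i l = 0"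
      using unique_parent_edge[OF i] by blast
    then show ?thesis using i j unfolding children_def by (cases "j = k") auto
  qed
  have "(\<Sum>i\<le>n+1. E n i j) = (\<Sum>i\<in>children n j. 1)"
  proof (rule sum.mono_neutral_cong_right)
    show "children n j \<subseteq> {..n+1}" using children_le by auto
    show "\<forall>i\<in>{..n+1} - children n j. E n i j = 0" using E01 by simp
    show "E n i j = 1" if "i \<in> children n j" for i
      using E01[OF children_le[OF that]] that by simp
  qed simp
  then show ?thesis by simp
qed

text \<open>The \<open>n+2\<close> vertices of level \<open>n+1\<close> have one parent each, and each of the \<open>n+1\<close>
  vertices of level \<open>n\<close> has at least one child.\<close>

lemma unique_branching:
  "\<exists>a\<le>n. card (children n a) = 2 \<and> (\<forall>j\<le>n. j \<noteq> a \<longrightarrow> card (children n j) = 1)"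
proof -
  have pos: "1 \<le> card (children n j)" if "j \<le> n" for j
  proof -
    have "0 < card (children n j)"
      using children_nonempty[OF that] finite_children by (simp add: card_gt_0_iff)
    then show ?thesis by simp
  qed
  have "(\<Sum>j\<le>n. card (children n j)) = (\<Sum>j\<le>n. \<Sum>i\<le>n+1. E n i j)"
    by (rule sum.cong) (simp_all add: card_children)
  also have "\<dots> = (\<Sum>i\<le>n+1. \<Sum>j\<le>n. E n i j)"
    by (rule sum.swap)
  also have "\<dots> = n + 2" by (simp add: one_parent)
  finally have "(\<Sum>j\<le>n. card (children n j) - 1) = Suc 0"
    using sum_subtractf_nat[of "{..n}" "\<lambda>_. 1" "\<lambda>j. card (children n j)"] pos by simp
  then obtain a where a: "a \<le> n" "card (children n a) - 1 = 1"
    and others: "\<forall>j\<le>n. a \<noteq> j \<longrightarrow> card (children n j) - 1 = 0"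
    by (auto simp: sum_eq_Suc0_iff)
  have "card (children n a) = 2" using a by simp
  moreover have "card (children n j) = 1" if "j \<le> n" "j \<noteq> a" for j
    using pos[OF that(1)] others that by auto
  ultimately show ?thesis using a(1) by blast
qed

lemma a_seq_branching:
  "a_seq E (Suc n) \<le> n \<and> card (children n (a_seq E (Suc n))) = 2
    \<and> (\<forall>j\<le>n. j \<noteq> a_seq E (Suc n) \<longrightarrow> card (children n j) = 1)"
proof -
  obtain a where a: "a \<le> n" "card (children n a) = 2" "\<forall>j\<le>n. j \<noteq> a \<longrightarrow> card (children n j) = 1"
    using unique_branching by blast
  have "a_seq E (Suc n) = a"
    unfolding a_seq_def
  proof (rule the_equality)
    show "a \<le> Suc n - 1 \<and> 2 \<le> (\<Sum>i\<le>Suc n. E (Suc n - 1) i a)"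
      using a card_children[of a n] by simp
    fix b assume "b \<le> Suc n - 1 \<and> 2 \<le> (\<Sum>i\<le>Suc n. E (Suc n - 1) i b)"
    then show "b = a" using a card_children[of b n] by force
  qed
  with a show ?thesis by simp
qed

lemma children_a_seq:
  obtains r' where "r' \<noteq> r_seq E (Suc n)"
    "children n (a_seq E (Suc n)) = {r_seq E (Suc n), r'}"
proof -
  let ?a = "a_seq E (Suc n)"
  have "card (children n ?a) = 2" using a_seq_branching[of n] by blast
  then obtain p q where pq: "children n ?a = {p, q}" "p \<noteq> q"
    unfolding card_2_iff by blast
  have "r_seq E (Suc n) = (GREATEST i. i \<in> children n ?a)"
    unfolding r_seq_def children_def by simp
  also have "\<dots> \<in> children n ?a"
  proof (rule GreatestI_nat[of _ p "Suc n"])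
    show "p \<in> children n ?a" using pq(1) by simp
  qed (simp add: children_def)
  finally have "r_seq E (Suc n) \<in> {p, q}" using pq(1) by simp
  then consider "r_seq E (Suc n) = p" | "r_seq E (Suc n) = q" by blast
  then show thesis
  proof cases
    case 1
    then show thesis using pq by (intro that[of q]) auto
  next
    case 2
    then show thesis using pq by (intro that[of p]) auto
  qed
qed

lemma r_seq_0: "r_seq E 0 = 0"
  by (simp add: r_seq_def)

lemma Xmin_0: "x \<in> Xmin E \<Longrightarrow> x 0 = 0"
  unfolding Xmin_def by simp

lemma Xmin_le: "x \<in> Xmin E \<Longrightarrow> x n \<le> n"
  unfolding Xmin_def by simp

lemma Xmin_child: "x \<in> Xmin E \<Longrightarrow> x (Suc n) \<in> children n (x n)"
  using Xmin_le[of x "Suc n"] unfolding Xmin_def children_def by simp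

lemma XminI:
  assumes "x 0 = 0" "\<And>n. x (Suc n) \<in> children n (x n)"
  shows "x \<in> Xmin E"
proof -
  have "x n \<le> n" for n
    using assms(1) children_le[OF assms(2)] by (cases n) auto
  then show ?thesis using assms unfolding Xmin_def children_def by simp
qed

lemma Xmin_agree_below:
  assumes x: "x \<in> Xmin E" and y: "y \<in> Xmin E" and "x n = y n" "l \<le> n"
  shows "x l = y l"
proof -
  have "x n = y n \<Longrightarrow> \<forall>l\<le>n. x l = y l" for n
  proof (induction n)
    case (Suc n)
    have "x n = y n"
      using parent_unique[OF Xmin_child[OF x] _ Xmin_le[OF x] Xmin_le[OF y]] Xmin_child[OF y] Suc.prems
      by simp
    then show ?case using Suc.IH Suc.prems by (auto simp: le_Suc_eq)
  qed simp
  with assms show ?thesis by blast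
qed

definition some_child :: "nat \<Rightarrow> nat \<Rightarrow> nat" where
  "some_child n j = (SOME i. i \<in> children n j)"

lemma some_child: "j \<le> n \<Longrightarrow> some_child n j \<in> children n j"
  unfolding some_child_def using children_nonempty by (simp add: some_in_eq)

primrec extend_path :: "(nat \<Rightarrow> nat) \<Rightarrow> nat \<Rightarrow> nat \<Rightarrow> nat" where
  "extend_path p m 0 = p 0"
| "extend_path p m (Suc l) = (if Suc l \<le> m then p (Suc l) else some_child l (extend_path p m l))"

lemma extend_path_prefix: "l \<le> m \<Longrightarrow> extend_path p m l = p l"
  by (cases l) auto

lemma extend_path_in_Xmin:
  assumes p0: "p 0 = 0" and p: "\<And>l. l < m \<Longrightarrow> p (Suc l) \<in> children l (p l)"
  shows "extend_path p m \<in> Xmin E"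
proof -
  have le: "extend_path p m l \<le> l" for l
  proof (induction l)
    case (Suc l)
    show ?case
    proof (cases "Suc l \<le> m")
      case True
      then show ?thesis using children_le[OF p[of l]] by simp
    next
      case False
      then show ?thesis using children_le[OF some_child[OF Suc.IH]] by simp
    qed
  qed (simp add: p0)
  have "extend_path p m (Suc l) \<in> children l (extend_path p m l)" for l
  proof (cases "Suc l \<le> m")
    case True
    then show ?thesis using p[of l] extend_path_prefix[of l m p] by simp
  next
    case False
    then show ?thesis using some_child[OF le] by simp
  qed
  then show ?thesis by (intro XminI) (simp_all add: p0)
qed

lemma Xmin_extend_to_child:
  assumes x: "x \<in> Xmin E" and i: "i \<in> children m (x m)"
  obtains y where "y \<in> Xmin E" "\<And>l. l \<le> m \<Longrightarrow> y l = x l" "y (Suc m) = i"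
proof -
  let ?p = "x(Suc m := i)"
  have "extend_path ?p (Suc m) \<in> Xmin E"
  proof (rule extend_path_in_Xmin)
    show "?p 0 = 0" using Xmin_0[OF x] by simp
    show "?p (Suc l) \<in> children l (?p l)" if "l < Suc m" for l
      using that i Xmin_child[OF x, of l] by (cases "l = m") auto
  qed
  moreover have "extend_path ?p (Suc m) l = x l" if "l \<le> m" for l
    using that extend_path_prefix[of l "Suc m" ?p] by simp
  moreover have "extend_path ?p (Suc m) (Suc m) = i"
    using extend_path_prefix[of "Suc m" "Suc m" ?p] by simp
  ultimately show thesis by (rule that)
qed

lemma Xmin_through_vertex: "i \<le> m \<Longrightarrow> \<exists>x\<in>Xmin E. x m = i"
proof (induction m arbitrary: i)
  case 0
  have "extend_path (\<lambda>_. 0) 0 \<in> Xmin E" by (rule extend_path_in_Xmin) simp_all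
  moreover have "extend_path (\<lambda>_. 0) 0 0 = i" using 0 by simp
  ultimately show ?case by blast
next
  case (Suc m)
  obtain j where j: "j \<le> m" "i \<in> children m j"
    using parent_exists[of i m] Suc.prems by auto
  obtain x where x: "x \<in> Xmin E" "x m = j" using Suc.IH[OF j(1)] by blast
  obtain y where "y \<in> Xmin E" "y (Suc m) = i"
    using Xmin_extend_to_child[OF x(1)] j(2) x(2) by metis
  then show ?case by blast
qed

lemma Xmin_split_at_r_seq:
  obtains x y where "x \<in> Xmin E" "y \<in> Xmin E" "\<And>l. l \<le> m \<Longrightarrow> x l = y l"
    "x (Suc m) = r_seq E (Suc m)" "y (Suc m) \<noteq> r_seq E (Suc m)"
proof -
  let ?a = "a_seq E (Suc m)" and ?r = "r_seq E (Suc m)"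
  obtain r' where r': "r' \<noteq> ?r" "children m ?a = {?r, r'}"
    by (rule children_a_seq)
  obtain z where z: "z \<in> Xmin E" "z m = ?a"
    using Xmin_through_vertex a_seq_branching[of m] by blast
  obtain x where x: "x \<in> Xmin E" "\<And>l. l \<le> m \<Longrightarrow> x l = z l" "x (Suc m) = ?r"
    using Xmin_extend_to_child[OF z(1), of ?r m] z(2) r'(2) by auto
  obtain y where y: "y \<in> Xmin E" "\<And>l. l \<le> m \<Longrightarrow> y l = z l" "y (Suc m) = r'"
    using Xmin_extend_to_child[OF z(1), of r' m] z(2) r'(2) by auto
  show thesis by (rule that[OF x(1) y(1)]) (use x(2,3) y(2,3) r'(1) in auto)
qed

definition Rsum :: "nat \<Rightarrow> (nat \<Rightarrow> 'a::comm_ring_1) \<Rightarrow> (nat \<Rightarrow> nat) \<Rightarrow> 'a" where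
  "Rsum n \<beta> x = (\<Sum>l\<le>n. \<beta> l * chiB (r_seq E l) l x)"

lemma Rsum_Suc: "Rsum (Suc n) \<beta> x = Rsum n \<beta> x + \<beta> (Suc n) * chiB (r_seq E (Suc n)) (Suc n) x"
  unfolding Rsum_def by simp

lemma Rsum_cong:
  "(\<And>l. l \<le> n \<Longrightarrow> x l = y l) \<Longrightarrow> (\<And>l. l \<le> n \<Longrightarrow> \<beta> l = \<gamma> l) \<Longrightarrow> Rsum n \<beta> x = Rsum n \<gamma> y"
  unfolding Rsum_def chiB_def by (rule sum.cong) simp_all

lemma Rsum_add: "Rsum n (\<lambda>l. \<beta> l + \<gamma> l) x = Rsum n \<beta> x + Rsum n \<gamma> x"
  unfolding Rsum_def by (simp add: sum.distrib distrib_right)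

lemma Rsum_diff: "Rsum n (\<lambda>l. \<beta> l - \<gamma> l) x = Rsum n \<beta> x - Rsum n \<gamma> x"
  unfolding Rsum_def by (simp add: sum_subtractf left_diff_distrib)

lemma Rsum_scale: "Rsum n (\<lambda>l. c * \<beta> l) x = c * Rsum n \<beta> x"
  unfolding Rsum_def by (simp add: sum_distrib_left mult.assoc)

lemma continuous_on_Rsum: "continuous_on S (Rsum n (\<beta> :: nat \<Rightarrow> int))"
  unfolding Rsum_def by (intro continuous_intros continuous_on_chiB)

lemma Rsum_eq_0_imp_coeff_eq_0:
  assumes "\<forall>x\<in>Xmin E. Rsum n \<beta> x = 0" and "l \<le> n"
  shows "\<beta> l = 0"
  using assms
proof (induction n arbitrary: l)
  case 0
  obtain x where x: "x \<in> Xmin E" using Xmin_through_vertex[of 0 0] by blast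
  then have "Rsum 0 \<beta> x = \<beta> 0"
    unfolding Rsum_def chiB_def by (simp add: Xmin_0 r_seq_0)
  then show ?case using 0 x by simp
next
  case (Suc n)
  obtain x y where xy: "x \<in> Xmin E" "y \<in> Xmin E" "\<And>l. l \<le> n \<Longrightarrow> x l = y l"
    "x (Suc n) = r_seq E (Suc n)" "y (Suc n) \<noteq> r_seq E (Suc n)"
    by (rule Xmin_split_at_r_seq[of n]) blast
  have "Rsum n \<beta> x = Rsum n \<beta> y" by (rule Rsum_cong) (simp_all add: xy(3))
  then have "Rsum (Suc n) \<beta> x - Rsum (Suc n) \<beta> y = \<beta> (Suc n)"
    unfolding Rsum_Suc chiB_def using xy(4,5) by simp
  then have top: "\<beta> (Suc n) = 0" using Suc.prems(1) xy(1,2) by simp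
  then have "\<forall>x\<in>Xmin E. Rsum n \<beta> x = 0" using Suc.prems(1) by (simp add: Rsum_Suc)
  then show ?case using Suc.IH top Suc.prems(2) by (cases "l = Suc n") simp_all
qed

definition Rspan :: "nat \<Rightarrow> ((nat \<Rightarrow> nat) \<Rightarrow> 'a::comm_ring_1) set" where
  "Rspan n = {f. \<exists>\<beta>. \<forall>x\<in>Xmin E. f x = Rsum n \<beta> x}"

lemma Rspan_cong: "f \<in> Rspan n \<Longrightarrow> (\<And>x. x \<in> Xmin E \<Longrightarrow> g x = f x) \<Longrightarrow> g \<in> Rspan n"
  unfolding Rspan_def by auto

lemma Rspan_zero: "(\<lambda>x. 0) \<in> Rspan n"
  unfolding Rspan_def Rsum_def by (auto intro!: exI[of _ "\<lambda>_. 0"])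

lemma Rspan_add:
  assumes "f \<in> Rspan n" "g \<in> Rspan n"
  shows "(\<lambda>x. f x + g x) \<in> Rspan n"
proof -
  obtain \<beta> \<gamma> where "\<forall>x\<in>Xmin E. f x = Rsum n \<beta> x" "\<forall>x\<in>Xmin E. g x = Rsum n \<gamma> x"
    using assms unfolding Rspan_def by blast
  then have "\<forall>x\<in>Xmin E. f x + g x = Rsum n (\<lambda>l. \<beta> l + \<gamma> l) x" by (simp add: Rsum_add)
  then show ?thesis unfolding Rspan_def by blast
qed

lemma Rspan_diff:
  assumes "f \<in> Rspan n" "g \<in> Rspan n"
  shows "(\<lambda>x. f x - g x) \<in> Rspan n"
proof -
  obtain \<beta> \<gamma> where "\<forall>x\<in>Xmin E. f x = Rsum n \<beta> x" "\<forall>x\<in>Xmin E. g x = Rsum n \<gamma> x"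
    using assms unfolding Rspan_def by blast
  then have "\<forall>x\<in>Xmin E. f x - g x = Rsum n (\<lambda>l. \<beta> l - \<gamma> l) x" by (simp add: Rsum_diff)
  then show ?thesis unfolding Rspan_def by blast
qed

lemma Rspan_scale:
  assumes "f \<in> Rspan n"
  shows "(\<lambda>x. c * f x) \<in> Rspan n"
proof -
  obtain \<beta> where "\<forall>x\<in>Xmin E. f x = Rsum n \<beta> x"
    using assms unfolding Rspan_def by blast
  then have "\<forall>x\<in>Xmin E. c * f x = Rsum n (\<lambda>l. c * \<beta> l) x" by (simp add: Rsum_scale)
  then show ?thesis unfolding Rspan_def by blast
qed

lemma Rspan_sum:
  "finite I \<Longrightarrow> (\<And>i. i \<in> I \<Longrightarrow> g i \<in> Rspan n) \<Longrightarrow> (\<lambda>x. \<Sum>i\<in>I. g i x) \<in> Rspan n"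
  by (induction I rule: finite_induct) (simp_all add: Rspan_zero Rspan_add)

lemma Rspan_Suc:
  assumes "f \<in> Rspan n"
  shows "f \<in> Rspan (Suc n)"
proof -
  obtain \<beta> where \<beta>: "\<forall>x\<in>Xmin E. f x = Rsum n \<beta> x"
    using assms unfolding Rspan_def by blast
  have "Rsum (Suc n) (\<beta>(Suc n := 0)) x = Rsum n \<beta> x" for x
    unfolding Rsum_Suc using Rsum_cong[of n x x "\<beta>(Suc n := 0)" \<beta>] by simp
  then have "\<forall>x\<in>Xmin E. f x = Rsum (Suc n) (\<beta>(Suc n := 0)) x" using \<beta> by simp
  then show ?thesis unfolding Rspan_def by blast
qed

lemma chiB_r_seq_in_Rspan: "(chiB (r_seq E n) n :: _ \<Rightarrow> 'a::comm_ring_1) \<in> Rspan n"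
proof -
  let ?\<beta> = "\<lambda>l. if l = n then 1 else 0 :: 'a"
  have "Rsum n ?\<beta> x = (\<Sum>l\<le>n. if l = n then chiB (r_seq E l) l x else 0)" for x
    unfolding Rsum_def by (rule sum.cong) simp_all
  then have "chiB (r_seq E n) n x = Rsum n ?\<beta> x" for x
    by simp
  then show ?thesis unfolding Rspan_def by blast
qed

lemma chiB_eq_sum_children:
  assumes x: "x \<in> Xmin E" and j: "j \<le> n"
  shows "chiB j n x = (\<Sum>i\<in>children n j. chiB i (Suc n) x :: 'a::comm_ring_1)"
proof -
  have "x (Suc n) \<in> children n j \<longleftrightarrow> x n = j"
    using Xmin_child[OF x] parent_unique[OF Xmin_child[OF x] _ Xmin_le[OF x] j] by auto
  then show ?thesis
    unfolding chiB_def using finite_children by (simp add: sum.delta')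
qed

lemma children_minus_subset_r_seq:
  assumes i: "i \<in> children n j" and j: "j \<le> n" and r: "i \<noteq> r_seq E (Suc n)"
  shows "children n j - {i} \<subseteq> {r_seq E (Suc n)}"
proof (cases "j = a_seq E (Suc n)")
  case True
  obtain r' where "children n j = {r_seq E (Suc n), r'}"
    using children_a_seq True by blast
  then show ?thesis using i r by auto
next
  case False
  then have "card (children n j) = 1" using a_seq_branching[of n] j by blast
  then have "children n j = {i}" using i by (auto simp: card_1_singleton_iff)
  then show ?thesis by simp
qed

lemma chiB_in_Rspan: "i \<le> n \<Longrightarrow> (chiB i n :: _ \<Rightarrow> 'a::comm_ring_1) \<in> Rspan n"
proof (induction n arbitrary: i)
  case 0
  then show ?case using chiB_r_seq_in_Rspan[of 0] by (simp add: r_seq_0)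
next
  case (Suc n)
  let ?r = "r_seq E (Suc n)"
  show ?case
  proof (cases "i = ?r")
    case True
    then show ?thesis using chiB_r_seq_in_Rspan by simp
  next
    case False
    obtain j where j: "j \<le> n" "i \<in> children n j"
      using parent_exists[of i n] Suc.prems by auto
    have "(chiB i (Suc n) x :: 'a) = chiB j n x - (\<Sum>i'\<in>children n j - {i}. chiB i' (Suc n) x)"
      if "x \<in> Xmin E" for x
      using chiB_eq_sum_children[OF that j(1), symmetric] j(2) finite_children
      by (simp add: sum.remove eq_diff_eq)
    moreover have "(\<lambda>x. chiB j n x - (\<Sum>i'\<in>children n j - {i}. chiB i' (Suc n) x) :: 'a)
      \<in> Rspan (Suc n)"
    proof (rule Rspan_diff)
      show "(chiB j n :: _ \<Rightarrow> 'a) \<in> Rspan (Suc n)" using Suc.IH[OF j(1)] by (rule Rspan_Suc)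
      show "(\<lambda>x. \<Sum>i'\<in>children n j - {i}. chiB i' (Suc n) x :: 'a) \<in> Rspan (Suc n)"
        using children_minus_subset_r_seq[OF j(2,1) False] chiB_r_seq_in_Rspan finite_children
        by (intro Rspan_sum) auto
    qed
    ultimately show ?thesis by (rule Rspan_cong[rotated])
  qed
qed

lemma prefix_determined_in_Rspan:
  fixes f :: "(nat \<Rightarrow> nat) \<Rightarrow> 'a::comm_ring_1"
  assumes f: "\<And>x y. x \<in> Xmin E \<Longrightarrow> y \<in> Xmin E \<Longrightarrow> (\<forall>l\<le>n. x l = y l) \<Longrightarrow> f x = f y"
  shows "f \<in> Rspan n"
proof -
  have "\<forall>i\<in>{..n}. \<exists>x. x \<in> Xmin E \<and> x n = i"
    using Xmin_through_vertex by (simp add: Bex_def)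
  from bchoice[OF this] obtain pt where pt: "\<forall>i\<in>{..n}. pt i \<in> Xmin E \<and> pt i n = i"
    by blast
  have "f x = (\<Sum>i\<le>n. f (pt i) * chiB i n x)" if x: "x \<in> Xmin E" for x
  proof -
    have xn: "x n \<le> n" by (rule Xmin_le[OF x])
    then have y: "pt (x n) \<in> Xmin E" "x n = pt (x n) n" using pt by auto
    have "\<forall>l\<le>n. x l = pt (x n) l"
      using Xmin_agree_below[OF x y] by blast
    then have "f x = f (pt (x n))" using f[OF x y(1)] by blast
    also have "\<dots> = (\<Sum>i\<le>n. if x n = i then f (pt i) else 0)"
      using xn by simp
    also have "\<dots> = (\<Sum>i\<le>n. f (pt i) * chiB i n x)"
      unfolding chiB_def by (rule sum.cong) simp_all
    finally show ?thesis .
  qed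
  moreover have "(\<lambda>x. \<Sum>i\<le>n. f (pt i) * chiB i n x) \<in> Rspan n"
    by (intro Rspan_sum Rspan_scale chiB_in_Rspan) simp_all
  ultimately show ?thesis by (rule Rspan_cong[rotated])
qed

end

lemma minimal_reduction_imp_min_reduction: "minimal_reduction Abar E \<Longrightarrow> min_reduction E"
  unfolding minimal_reduction_def min_reduction_def by blast

section \<open>The isomorphism\<close>

locale completed_reduction = unimodular_completion Abar c + min_reduction E
  for Abar :: "nat \<Rightarrow> int mat" and c :: "nat \<Rightarrow> int vec" and E :: "nat \<Rightarrow> nat \<Rightarrow> nat \<Rightarrow> nat"
begin

definition PhiZ :: "nat \<Rightarrow> int vec \<Rightarrow> (nat \<Rightarrow> nat) \<Rightarrow> int" where
  "PhiZ n v x = (if x \<in> Xmin E then Rsum n (\<lambda>l. (Amat_int n *\<^sub>v v) $ l) x else 0)"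

lemma Phi_eq_PhiZ:
  assumes v: "v \<in> carrier_vec (n+1)"
  shows "Phi Abar c E n v = (\<lambda>x. rat_of_int (PhiZ n v x))"
proof -
  let ?u = "Amat_int n *\<^sub>v v"
  have u: "?u \<in> carrier_vec (n+1)" by (rule mult_mat_vec_carrier[OF Amat_int_carrier v])
  have "Amat Abar c n *\<^sub>v map_vec rat_of_int v = map_vec rat_of_int ?u"
    unfolding Amat_eq_of_int by (rule of_int_hom.mult_mat_vec_hom[OF Amat_int_carrier v, symmetric])
  moreover have "Rmap E n (map_vec rat_of_int ?u) x = rat_of_int (Rsum n (\<lambda>l. ?u $ l) x)" for x
  proof -
    have "map_vec rat_of_int ?u $ l = rat_of_int (?u $ l)" if "l \<le> n" for l
      using that carrier_vecD[OF u] by simp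
    moreover have "(chiB i l x :: rat) = rat_of_int (chiB i l x)" for i l
      by (simp add: chiB_def)
    ultimately show ?thesis
      unfolding Rmap_def Rsum_def of_int_sum of_int_mult by (intro sum.cong) simp_all
  qed
  ultimately show ?thesis unfolding Phi_def PhiZ_def by auto
qed

lemma compatible_PhiZ: "compatible PhiZ"
  unfolding compatible_def
proof (intro allI ballI)
  fix n and v :: "int vec" assume v: "v \<in> carrier_vec (n+1)"
  let ?u = "Amat_int n *\<^sub>v v"
  have u: "?u \<in> carrier_vec (n+1)" by (rule mult_mat_vec_carrier[OF Amat_int_carrier v])
  have "Rsum n (\<lambda>l. (?u @\<^sub>v 0\<^sub>v 1) $ l) x = Rsum n (\<lambda>l. ?u $ l) x" for x
    by (rule Rsum_cong) (use carrier_vecD[OF u] in simp_all)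
  moreover have "(?u @\<^sub>v 0\<^sub>v 1) $ Suc n = 0" using carrier_vecD[OF u] by simp
  ultimately have eq: "Rsum (Suc n) (\<lambda>l. (?u @\<^sub>v 0\<^sub>v 1) $ l) x = Rsum n (\<lambda>l. ?u $ l) x" for x
    unfolding Rsum_Suc by simp
  show "PhiZ (Suc n) (Abar n *\<^sub>v v) = PhiZ n v"
    unfolding PhiZ_def Amat_int_Suc_mult_Abar[OF v] Suc_eq_plus1[symmetric] eq ..
qed

lemma PhiZ_add:
  assumes v: "v \<in> carrier_vec (n+1)" and w: "w \<in> carrier_vec (n+1)"
  shows "PhiZ n (v + w) = (\<lambda>x. PhiZ n v x + PhiZ n w x)"
proof -
  have "Amat_int n *\<^sub>v (v + w) = Amat_int n *\<^sub>v v + Amat_int n *\<^sub>v w"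
    by (rule mult_add_distrib_mat_vec[OF Amat_int_carrier v w])
  then have "Rsum n (\<lambda>l. (Amat_int n *\<^sub>v (v + w)) $ l) x
      = Rsum n (\<lambda>l. (Amat_int n *\<^sub>v v) $ l + (Amat_int n *\<^sub>v w) $ l) x" for x
    using Amat_int_carrier[of n] v w by (intro Rsum_cong) auto
  then show ?thesis unfolding PhiZ_def by (auto simp: Rsum_add)
qed

lemma inj_on_PhiZ: "inj_on (PhiZ n) (carrier_vec (n+1))"
proof (rule inj_onI)
  fix v w assume v: "v \<in> carrier_vec (n+1)" and w: "w \<in> carrier_vec (n+1)" and eq: "PhiZ n v = PhiZ n w"
  let ?\<delta> = "\<lambda>l. (Amat_int n *\<^sub>v v) $ l - (Amat_int n *\<^sub>v w) $ l"
  have "Rsum n (\<lambda>l. (Amat_int n *\<^sub>v v) $ l) x = Rsum n (\<lambda>l. (Amat_int n *\<^sub>v w) $ l) x"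
    if "x \<in> Xmin E" for x
    using fun_cong[OF eq, of x] that unfolding PhiZ_def by simp
  then have "\<forall>x\<in>Xmin E. Rsum n ?\<delta> x = 0" by (simp add: Rsum_diff)
  then have "?\<delta> l = 0" if "l \<le> n" for l
    using Rsum_eq_0_imp_coeff_eq_0 that by blast
  then have "Amat_int n *\<^sub>v v = Amat_int n *\<^sub>v w"
    using Amat_int_carrier[of n] v w by (intro eq_vecI) auto
  then show "v = w" by (rule Amat_int_mult_vec_cancel[OF v w])
qed

lemma PhiZ_in_CXZ:
  assumes v: "v \<in> carrier_vec (n+1)"
  shows "PhiZ n v \<in> CXZ E"
proof -
  have "continuous_on (Xmin E) (Rsum n (\<lambda>l. (Amat_int n *\<^sub>v v) $ l))"
    by (rule continuous_on_Rsum)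
  then have "continuous_on (Xmin E) (PhiZ n v)"
    by (rule continuous_on_cong[THEN iffD1, rotated 2]) (simp_all add: PhiZ_def)
  then show ?thesis unfolding CXZ_def PhiZ_def by simp
qed

lemma CXZ_eq_PhiZ_image: "CXZ E = (\<Union>n. PhiZ n ` carrier_vec (n+1))"
proof
  show "(\<Union>n. PhiZ n ` carrier_vec (n+1)) \<subseteq> CXZ E" using PhiZ_in_CXZ by blast
  show "CXZ E \<subseteq> (\<Union>n. PhiZ n ` carrier_vec (n+1))"
  proof
    fix f assume "f \<in> CXZ E"
    then have fc: "continuous_on (Xmin E) f" and f0: "\<And>x. x \<notin> Xmin E \<Longrightarrow> f x = 0"
      unfolding CXZ_def by auto
    obtain N where "\<And>x y. x \<in> Xmin E \<Longrightarrow> y \<in> Xmin E \<Longrightarrow> (\<forall>l\<le>N. x l = y l) \<Longrightarrow> f x = f y"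
      using continuous_on_compact_cylinder_constant[OF compact_Xmin fc] by blast
    then have "f \<in> Rspan N" by (rule prefix_determined_in_Rspan)
    then obtain \<beta> where \<beta>: "\<forall>x\<in>Xmin E. f x = Rsum N \<beta> x"
      unfolding Rspan_def by blast
    define v where "v = adj_mat (Amat_int N) *\<^sub>v vec (N+1) \<beta>"
    have v: "v \<in> carrier_vec (N+1)"
      unfolding v_def by (rule mult_mat_vec_carrier[OF Amat_int_inverse(3) vec_carrier])
    have "PhiZ N v x = f x" for x
    proof (cases "x \<in> Xmin E")
      case True
      have "Rsum N (\<lambda>l. (Amat_int N *\<^sub>v v) $ l) x = Rsum N \<beta> x"
        unfolding v_def Amat_int_mult_adj_mat[OF vec_carrier] by (rule Rsum_cong) simp_all
      then show ?thesis using True \<beta> unfolding PhiZ_def by simp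
    qed (simp add: PhiZ_def f0)
    then have "f = PhiZ N v" by auto
    with v show "f \<in> (\<Union>n. PhiZ n ` carrier_vec (n+1))" by blast
  qed
qed

lemma PhiZ_unit: "PhiZ 0 (vec 1 (\<lambda>_. 1)) = chiX E"
proof
  fix x
  have "Amat_int 0 *\<^sub>v vec 1 (\<lambda>_. 1) = vec 1 (\<lambda>_. 1)" by simp
  then show "PhiZ 0 (vec 1 (\<lambda>_. 1)) x = chiX E x"
    unfolding PhiZ_def chiX_def Rsum_def chiB_def by (simp add: r_seq_0 Xmin_0)
qed

lemma iota_eq_PhiZ:
  assumes spec: "\<forall>n\<ge>1. \<forall>v\<in>carrier_vec (n+1).
      (\<lambda>x. rat_of_int (\<Psi> (iota Abar n v) x)) = Phi Abar c E n v"
    and v: "v \<in> carrier_vec (n+1)"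
  shows "\<Psi> (iota Abar n v) = PhiZ n v"
proof -
  (* spec says nothing about level 0, so pass to the representative at level n+1 *)
  let ?w = "Abar n *\<^sub>v v"
  have w: "?w \<in> carrier_vec (Suc n + 1)" using dims[of n] v by simp
  have "(\<lambda>x. rat_of_int (\<Psi> (iota Abar (Suc n) ?w) x)) = (\<lambda>x. rat_of_int (PhiZ (Suc n) ?w x))"
    using spec w Phi_eq_PhiZ[OF w] by simp
  then have "\<Psi> (iota Abar (Suc n) ?w) = PhiZ (Suc n) ?w"
    by (simp add: fun_eq_iff)
  then show ?thesis
    using iota_Suc[OF v] compatible_PhiZ v unfolding compatible_def by simp
qed

lemma exists_Psi:
  "\<exists>\<Psi>. \<forall>n\<ge>1. \<forall>v\<in>carrier_vec (n+1). (\<lambda>x. rat_of_int (\<Psi> (iota Abar n v) x)) = Phi Abar c E n v"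
  using K0_induced_iota[OF compatible_PhiZ] Phi_eq_PhiZ by (intro exI[of _ "K0_induced PhiZ"]) simp

lemma iso_K0grp_CXZgrp:
  assumes "\<And>n v. v \<in> carrier_vec (n+1) \<Longrightarrow> \<Psi> (iota Abar n v) = PhiZ n v"
  shows "\<Psi> \<in> iso (K0grp Abar) (CXZgrp E)"
  by (rule iso_K0grpI[OF compatible_PhiZ PhiZ_add inj_on_PhiZ _ _ assms])
    (simp_all add: CXZgrp_def CXZ_eq_PhiZ_image)

end

theorem theorem4p2:
  fixes Abar :: "nat \<Rightarrow> int mat" and c :: "nat \<Rightarrow> int vec"
    and E :: "nat \<Rightarrow> nat \<Rightarrow> nat \<Rightarrow> nat"
  assumes dims: "\<And>n. Abar n \<in> carrier_mat (n+2) (n+1)"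
    and nonneg: "\<And>n i j. i < n+2 \<Longrightarrow> j < n+1 \<Longrightarrow> 0 \<le> Abar n $$ (i,j)"
    and rank: "\<And>n. vec_space.rank (n+2) (map_mat rat_of_int (Abar n)) = n+1"
    and red: "minimal_reduction Abar E"
    and cdim: "\<And>n. c n \<in> carrier_vec (n+2)"
    and det1: "\<And>n. det (Acomp Abar c n) = 1"
  shows "Gset Abar c = \<int>
    \<and> (\<exists>\<Psi>. \<forall>n\<ge>1. \<forall>v\<in>carrier_vec (n+1).
          (\<lambda>x. rat_of_int (\<Psi> (iota Abar n v) x)) = Phi Abar c E n v)
    \<and> (\<forall>\<Psi>. (\<forall>n\<ge>1. \<forall>v\<in>carrier_vec (n+1).
          (\<lambda>x. rat_of_int (\<Psi> (iota Abar n v) x)) = Phi Abar c E n v)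
        \<longrightarrow> \<Psi> \<in> iso (K0grp Abar) (CXZgrp E) \<and> \<Psi> (K0unit Abar) = chiX E)"
proof -
  interpret completed_reduction Abar c E
    using dims det1 minimal_reduction_imp_min_reduction[OF red]
    by (simp add: completed_reduction_def unimodular_completion_def
        unimodular_completion_axioms_def K0_system_def)
  have "\<Psi> \<in> iso (K0grp Abar) (CXZgrp E) \<and> \<Psi> (K0unit Abar) = chiX E"
    if spec: "\<forall>n\<ge>1. \<forall>v\<in>carrier_vec (n+1).
      (\<lambda>x. rat_of_int (\<Psi> (iota Abar n v) x)) = Phi Abar c E n v" for \<Psi>
  proof
    show "\<Psi> \<in> iso (K0grp Abar) (CXZgrp E)"
      using iso_K0grp_CXZgrp iota_eq_PhiZ[OF spec] by blast
    show "\<Psi> (K0unit Abar) = chiX E"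
      unfolding K0unit_def using iota_eq_PhiZ[OF spec, of "vec 1 (\<lambda>_. 1)" 0] PhiZ_unit by simp
  qed
  then show ?thesis using Gset_eq_Ints exists_Psi by blast
qed

end
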